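(* Let $T$ be a tree with $n>2$ vertices and let Algorithm 2 be applied to $T$ with gravity root $r$ (placed at the origin). Let $u$ be a vertex drawn on the $Y$-axis (i.e., with $x$-coordinate $0$), at position $(0,y_u)$, and let $\phi_u=a_2(u)-a_1(u)$. Put $B=(|T_u|-1)\cdot\frac{\pi}{2}\cdot\frac{n-\mathrm{odd}(n)}{n-1}\cdot\frac{1}{\phi_u}$. Then every vertex $w$ of $T_u$, drawn at $(x_w,y_w)$, satisfies $0\le y_w-y_u\le B$ and $|x_w|\le B$. (Equivalently, both the part of the drawing of $T_u$ lying in the closed first quadrant $x\ge0$ and the part lying in the closed second quadrant $x\le0$ fit in grids of side-length $B$.)
   Context: A vertex $r$ of an $n$-vertex tree $T$ is a gravity root if every connected component of $T\setminus r$ has at most $\frac{n}{2}$ vertices. $\mathrm{odd}(n)=1$ if $n$ is odd, $0$ otherwise. $T_v$ is the subtree rooted at $v$, $|T_v|$ its number of vertices. Strategy 1: for a non-leaf vertex $u$ with assigned $a_1(u)<a_2(u)$ and children $v_1,\dots,v_m$ in order, set $a_1(v_1)=a_1(u)$, $a_1(v_i)=a_2(v_{i-1})$ for $1<i\le m$, and $a_2(v_i)=a_1(v_i)+(a_2(u)-a_1(u))\cdot\frac{|T_{v_i}|}{|T_u|-1}$. Point rule $P_1(\theta_1,\theta_2)$ for $0\le\theta_1<\theta_2\le\frac{\pi}{2}$, with $d=\lceil\frac{1}{\theta_2-\theta_1}\rceil$: (i) if $\theta_2-\theta_1>\frac{\pi}{4}$: $(1,1)$; (ii) if $\arctan(\frac12)<\theta_2-\theta_1\le\frac{\pi}{4}$: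 $(1,2)$ if $\theta_1\ge\frac{\pi}{4}$, $(1,1)$ if $\arctan(\frac12)\le\theta_1<\frac{\pi}{4}$, $(2,1)$ if $\theta_1<\arctan(\frac12)$; (iii) if $\theta_2-\theta_1\le\arctan(\frac12)$: $(d,\lfloor\tan(\theta_1)d+1\rfloor)$ if $\theta_2\le\frac{\pi}{4}$, $(1,1)$ if $\theta_1<\frac{\pi}{4}<\theta_2$, $(\lfloor\tan(\frac{\pi}{2}-\theta_2)d+1\rfloor,d)$ if $\theta_1\ge\frac{\pi}{4}$. Point rule $P_2(\beta_1,\beta_2)$ for $0\le\beta_1<\beta_2\le\pi$: $(0,1)$ if $\beta_1<\frac{\pi}{2}<\beta_2$; $P_1(\beta_1,\beta_2)$ if $\beta_2\le\frac{\pi}{2}$; $(-x,y)$ with $(x,y)=P_1(\pi-\beta_2,\pi-\beta_1)$ if $\beta_1\ge\frac{\pi}{2}$. Algorithm 2 (input: a tree $T$, possibly with a cyclic order of neighbors at each vertex): choose a gravity root $r$ and root $T$ at $r$ (children ordered according to the given embedding, if any); set $a_1(r)=0$, $a_2(r)=\pi$, assign angles to all other vertices top-down by Strategy 1; place $r$ at $(0,0)$; top-down, place each child $v$ of an already placed vertex $u$ at (position of $u$) $+P_2(a_1(v),a_2(v))$. *)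

theory Defs
  imports Complex_Main
begin

text \<open>A tree rooted at r, given by its vertex set V and a parent function par
  (with the convention par r = r). The undirected tree has edges {v, par v}, v ~= r.\<close>
definition rooted_tree :: "'a set \<Rightarrow> ('a \<Rightarrow> 'a) \<Rightarrow> 'a \<Rightarrow> bool" where
  "rooted_tree V par r \<longleftrightarrow> finite V \<and> r \<in> V \<and> par r = r \<and>
     (\<forall>v\<in>V. par v \<in> V \<and> (\<exists>k. (par ^^ k) v = r))"

definition tree_adj :: "'a set \<Rightarrow> ('a \<Rightarrow> 'a) \<Rightarrow> 'a \<Rightarrow> 'a \<Rightarrow> bool" where
  "tree_adj V par x y \<longleftrightarrow> x \<in> V \<and> y \<in> V \<and> x \<noteq> y \<and> (par x = y \<or> par y = x)"

definition comp_minus :: "'a set \<Rightarrow> ('a \<Rightarrow> 'a) \<Rightarrow> 'a \<Rightarrow> 'a \<Rightarrow> 'a set" where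
  "comp_minus V par r x =
     {y. (\<lambda>a b. tree_adj V par a b \<and> a \<noteq> r \<and> b \<noteq> r)\<^sup>*\<^sup>* x y}"

definition gravity_root :: "'a set \<Rightarrow> ('a \<Rightarrow> 'a) \<Rightarrow> 'a \<Rightarrow> bool" where
  "gravity_root V par r \<longleftrightarrow>
     (\<forall>x\<in>V - {r}. real (card (comp_minus V par r x)) \<le> real (card V) / 2)"

definition subtree :: "'a set \<Rightarrow> ('a \<Rightarrow> 'a) \<Rightarrow> 'a \<Rightarrow> 'a set" where
  "subtree V par v = {w \<in> V. \<exists>k. (par ^^ k) w = v}"

definition children :: "'a set \<Rightarrow> ('a \<Rightarrow> 'a) \<Rightarrow> 'a \<Rightarrow> 'a \<Rightarrow> 'a set" where
  "children V par r u = {v \<in> V - {r}. par v = u}"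

definition oddn :: "nat \<Rightarrow> nat" where
  "oddn n = (if odd n then 1 else 0)"

definition P1 :: "real \<Rightarrow> real \<Rightarrow> real \<times> real" where
  "P1 t1 t2 = (let d = real_of_int \<lceil>1 / (t2 - t1)\<rceil> in
     if t2 - t1 > pi / 4 then (1, 1)
     else if arctan (1/2) < t2 - t1 then
       (if t1 \<ge> pi / 4 then (1, 2) else if arctan (1/2) \<le> t1 then (1, 1) else (2, 1))
     else if t2 \<le> pi / 4 then (d, real_of_int \<lfloor>tan t1 * d + 1\<rfloor>)
     else if t1 < pi / 4 then (1, 1)
     else (real_of_int \<lfloor>tan (pi / 2 - t2) * d + 1\<rfloor>, d))"

definition P2 :: "real \<Rightarrow> real \<Rightarrow> real \<times> real" where
  "P2 b1 b2 = (if b1 < pi / 2 \<and> pi / 2 < b2 then (0, 1)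
     else if b2 \<le> pi / 2 then P1 b1 b2
     else (- fst (P1 (pi - b2) (pi - b1)), snd (P1 (pi - b2) (pi - b1))))"

text \<open>Algorithm 2 with root r and children order chl u (a list of the children of u):
  a1, a2 are the angles assigned by Strategy 1, pos the drawing. These equations
  determine a1, a2, pos uniquely on V.\<close>
definition algorithm2 :: "'a set \<Rightarrow> ('a \<Rightarrow> 'a) \<Rightarrow> 'a \<Rightarrow> ('a \<Rightarrow> 'a list) \<Rightarrow>
    ('a \<Rightarrow> real) \<Rightarrow> ('a \<Rightarrow> real) \<Rightarrow> ('a \<Rightarrow> real \<times> real) \<Rightarrow> bool" where
  "algorithm2 V par r chl a1 a2 pos \<longleftrightarrow>
     (\<forall>u\<in>V. distinct (chl u) \<and> set (chl u) = children V par r u) \<and>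
     a1 r = 0 \<and> a2 r = pi \<and>
     (\<forall>u\<in>V. (chl u \<noteq> [] \<longrightarrow> a1 (chl u ! 0) = a1 u) \<and>
        (\<forall>i. 0 < i \<and> i < length (chl u) \<longrightarrow> a1 (chl u ! i) = a2 (chl u ! (i - 1))) \<and>
        (\<forall>v\<in>set (chl u). a2 v = a1 v + (a2 u - a1 u) *
              real (card (subtree V par v)) / (real (card (subtree V par u)) - 1))) \<and>
     pos r = (0, 0) \<and>
     (\<forall>v\<in>V - {r}. pos v = (fst (pos (par v)) + fst (P2 (a1 v) (a2 v)),
                            snd (pos (par v)) + snd (P2 (a1 v) (a2 v))))"

end

theory Submission
  imports Defs
begin

text \<open>Every vertex other than the gravity root gets a wedge \<open>\<theta> = a\<^sub>2 - a\<^sub>1\<close> of at most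
  \<open>c = (\<pi>/2)(n - odd(n))/(n - 1)\<close>: the children of the root because their subtrees have at
  most \<open>n/2\<close> vertices, the other vertices because wedges shrink from parent to child. The
  point rule \<open>P\<^sub>2\<close> moves from a parent to a child of wedge \<open>\<theta>\<close> by a vector with
  nonnegative \<open>y\<close>-coordinate and both coordinates at most \<open>c/\<theta>\<close>. Strategy 1 makes the
  wedge of a child \<open>v\<close> of \<open>u\<close> proportional to \<open>|T\<^sub>v|\<close>, so the bound
  \<open>(|T\<^sub>v| - 1) c/\<theta>\<^sub>v\<close> for the subtree of \<open>v\<close> plus one step \<open>c/\<theta>\<^sub>v\<close> is exactly
  \<open>(|T\<^sub>u| - 1) c/\<theta>\<^sub>u\<close>; induction then bounds the subtree of \<open>u\<close> relative to \<open>u\<close>.\<close>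

lemma arctan_half_less_pi_div_6: "arctan (1/2) < pi/6"
proof -
  have "sqrt 3 < 2"
    using real_sqrt_less_iff[of 3 4] by (simp add: real_sqrt_four)
  hence "1/2 < tan (pi/6)" by (simp add: tan_30 field_simps)
  hence "arctan (1/2) < arctan (tan (pi/6))" by (simp add: arctan_less_iff)
  also have "\<dots> = pi/6" by (rule arctan_tan) (use pi_gt_zero in linarith)+
  finally show ?thesis .
qed

lemma tan_nonneg_less_one:
  assumes "0 \<le> t" "t < pi/4"
  shows "0 \<le> tan t" "tan t < 1"
proof -
  show "0 \<le> tan t" using assms tan_gt_zero[of t] by (cases "t = 0") auto
  have "tan t < tan (pi/4)" by (rule tan_monotone) (use assms pi_gt_zero in linarith)+
  thus "tan t < 1" by (simp add: tan_45)
qed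

lemma floor_scaled_add_one_bounds:
  fixes t :: real and m :: int
  assumes "0 \<le> t" "t < 1" "0 < m"
  shows "0 \<le> \<lfloor>t * m + 1\<rfloor>" "\<lfloor>t * m + 1\<rfloor> \<le> m"
proof -
  have "0 \<le> t * m" "t * m < m" using assms by simp_all
  thus "0 \<le> \<lfloor>t * m + 1\<rfloor>" "\<lfloor>t * m + 1\<rfloor> \<le> m" by linarith+
qed

lemma ceiling_inverse_mult_le:
  fixes th c :: real
  assumes "0 < th" "th \<le> arctan (1/2)" "pi/2 \<le> c"
  shows "\<lceil>1 / th\<rceil> * th \<le> c"
proof -
  have "\<lceil>1 / th\<rceil> < 1 / th + 1" by linarith
  then have "\<lceil>1 / th\<rceil> * th < 1 + th" using assms(1) by (simp add: field_simps)
  moreover have "arctan (1/2) < pi/6" by (rule arctan_half_less_pi_div_6)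
  moreover have "3 \<le> pi" using sin_x_le_x[of "pi/6"] by (simp add: sin_30)
  ultimately show ?thesis using assms(2,3) by linarith
qed

text \<open>Wide wedges get coordinates at most 2 (at most 1 beyond \<open>\<pi>/4\<close>), narrow wedges
  coordinates at most \<open>\<lceil>1/\<theta>\<rceil>\<close>.\<close>
lemma P1_bounds:
  fixes t1 t2 c :: real
  assumes "0 \<le> t1" "t1 < t2" "t2 \<le> pi/2" "pi/2 \<le> c"
  shows "0 \<le> fst (P1 t1 t2)" "0 \<le> snd (P1 t1 t2)"
    and "fst (P1 t1 t2) * (t2 - t1) \<le> c" "snd (P1 t1 t2) * (t2 - t1) \<le> c"
proof -
  define th where "th = t2 - t1"
  define m where "m = \<lceil>1 / th\<rceil>"
  have th_pos: "0 < th" using assms by (simp add: th_def)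
  have th_le: "th \<le> c" using assms by (simp add: th_def)
  have m_pos: "0 < m" using th_pos unfolding m_def by (simp add: zero_less_ceiling)
  have narrow: "m * th \<le> c" if "th \<le> arctan (1/2)"
    using ceiling_inverse_mult_le[OF th_pos that assms(4)] unfolding m_def .
  have low: "0 \<le> \<lfloor>tan t * m + 1\<rfloor> \<and> \<lfloor>tan t * m + 1\<rfloor> * th \<le> c"
    if "0 \<le> t" "t < pi/4" "th \<le> arctan (1/2)" for t
  proof -
    have "0 \<le> tan t" "tan t < 1" using tan_nonneg_less_one that by auto
    from floor_scaled_add_one_bounds[OF this m_pos]
    have "0 \<le> \<lfloor>tan t * m + 1\<rfloor>" "real_of_int \<lfloor>tan t * m + 1\<rfloor> \<le> m" by simp_all
    moreover from this(2) have "\<lfloor>tan t * m + 1\<rfloor> * th \<le> m * th"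
      using th_pos by (simp add: mult_right_mono)
    ultimately show ?thesis using narrow[OF that(3)] by simp
  qed
  have P1_eq: "P1 t1 t2 = (if th > pi/4 then (1, 1)
     else if arctan (1/2) < th then
       (if t1 \<ge> pi/4 then (1, 2) else if arctan (1/2) \<le> t1 then (1, 1) else (2, 1))
     else if t2 \<le> pi/4 then (m, \<lfloor>tan t1 * m + 1\<rfloor>)
     else if t1 < pi/4 then (1, 1)
     else (\<lfloor>tan (pi/2 - t2) * m + 1\<rfloor>, m))"
    unfolding P1_def th_def m_def Let_def by simp
  consider (wide) "pi/4 < th" | (medium) "th \<le> pi/4" "arctan (1/2) < th"
    | (narrow_low) "th \<le> arctan (1/2)" "t2 \<le> pi/4"
    | (narrow_mid) "th \<le> arctan (1/2)" "t1 < pi/4" "pi/4 < t2"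
    | (narrow_high) "th \<le> arctan (1/2)" "pi/4 \<le> t1"
    by linarith
  then have "0 \<le> fst (P1 t1 t2) \<and> 0 \<le> snd (P1 t1 t2) \<and>
      fst (P1 t1 t2) * th \<le> c \<and> snd (P1 t1 t2) * th \<le> c"
  proof cases
    case wide
    then show ?thesis using assms unfolding P1_eq th_def by simp
  next
    case medium
    then show ?thesis using assms th_pos unfolding P1_eq by auto
  next
    case narrow_low
    then show ?thesis using low[of t1] narrow m_pos assms th_le unfolding P1_eq by simp
  next
    case narrow_mid
    then show ?thesis using assms th_le unfolding P1_eq by auto
  next
    case narrow_high
    then show ?thesis using low[of "pi/2 - t2"] narrow m_pos assms th_le unfolding P1_eq th_def
      by (simp add: not_le)
  qed
  then show "0 \<le> fst (P1 t1 t2)" "0 \<le> snd (P1 t1 t2)"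
    "fst (P1 t1 t2) * (t2 - t1) \<le> c" "snd (P1 t1 t2) * (t2 - t1) \<le> c"
    unfolding th_def by simp_all
qed

lemma P2_bounds:
  fixes b1 b2 c :: real
  assumes "0 \<le> b1" "b1 < b2" "b2 \<le> pi" "b2 - b1 \<le> c" "pi/2 \<le> c"
  shows "0 \<le> snd (P2 b1 b2)" "snd (P2 b1 b2) * (b2 - b1) \<le> c" "\<bar>fst (P2 b1 b2)\<bar> * (b2 - b1) \<le> c"
proof -
  consider (straddle) "b1 < pi/2" "pi/2 < b2" | (right) "b2 \<le> pi/2" | (left) "pi/2 \<le> b1"
    by linarith
  then have "0 \<le> snd (P2 b1 b2) \<and> snd (P2 b1 b2) * (b2 - b1) \<le> c \<and>
      \<bar>fst (P2 b1 b2)\<bar> * (b2 - b1) \<le> c"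
  proof cases
    case straddle
    then show ?thesis using assms by (simp add: P2_def)
  next
    case right
    then show ?thesis using P1_bounds[OF assms(1,2) right assms(5)] by (simp add: P2_def)
  next
    case left
    have "0 \<le> pi - b2" "pi - b2 < pi - b1" "pi - b1 \<le> pi/2" using left assms by auto
    from P1_bounds[OF this assms(5)] show ?thesis
      using left assms(2) by (simp add: P2_def)
  qed
  then show "0 \<le> snd (P2 b1 b2)" "snd (P2 b1 b2) * (b2 - b1) \<le> c"
    "\<bar>fst (P2 b1 b2)\<bar> * (b2 - b1) \<le> c" by simp_all
qed

lemma funpow_fixpoint: "f x = x \<Longrightarrow> (f ^^ k) x = x"
  by (induction k) auto

lemma rooted_tree_funpow_root: "rooted_tree V par r \<Longrightarrow> (par ^^ k) r = r"
  unfolding rooted_tree_def by (simp add: funpow_fixpoint)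

lemma rooted_tree_funpow_in: "rooted_tree V par r \<Longrightarrow> v \<in> V \<Longrightarrow> (par ^^ k) v \<in> V"
  by (induction k) (auto simp: rooted_tree_def)

lemma rooted_tree_par_in: "rooted_tree V par r \<Longrightarrow> v \<in> V \<Longrightarrow> par v \<in> V"
  unfolding rooted_tree_def by blast

text \<open>The only cycle of the parent function is the loop at the root: iterating a cycle
  through \<open>v\<close> as often as the distance from \<open>v\<close> to the root shows \<open>v = r\<close>.\<close>
lemma rooted_tree_cycle_root:
  assumes rt: "rooted_tree V par r" and "v \<in> V" "0 < m" "(par ^^ m) v = v"
  shows "v = r"
proof -
  obtain k where k: "(par ^^ k) v = r" using assms unfolding rooted_tree_def by blast
  have "v = ((par ^^ m) ^^ k) v" using funpow_fixpoint[of "par ^^ m" v] assms(4) by simp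
  also have "\<dots> = (par ^^ (m * k - k + k)) v"
    using \<open>0 < m\<close> by (simp add: funpow_mult)
  also have "\<dots> = (par ^^ (m * k - k)) ((par ^^ k) v)"
    by (simp only: funpow_add comp_apply)
  also have "\<dots> = r" using k rooted_tree_funpow_root[OF rt] by simp
  finally show ?thesis .
qed

lemma rooted_tree_induct[consumes 2, case_names root step]:
  assumes rt: "rooted_tree V par r" and "v \<in> V"
    and root: "P r" and step: "\<And>v. v \<in> V \<Longrightarrow> v \<noteq> r \<Longrightarrow> P (par v) \<Longrightarrow> P v"
  shows "P v"
proof -
  obtain k where "(par ^^ k) v = r" using rt \<open>v \<in> V\<close> unfolding rooted_tree_def by blast
  with \<open>v \<in> V\<close> show ?thesis
  proof (induction k arbitrary: v)
    case 0
    then show ?case using root by simp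
  next
    case (Suc k)
    have "P (par v)"
      using Suc rooted_tree_par_in[OF rt] by (simp add: funpow_Suc_right del: funpow.simps)
    then show ?case using Suc.prems root step by (cases "v = r") auto
  qed
qed

lemma finite_subtree: "rooted_tree V par r \<Longrightarrow> finite (subtree V par v)"
  unfolding rooted_tree_def subtree_def by simp

lemma subtree_self: "v \<in> V \<Longrightarrow> v \<in> subtree V par v"
  unfolding subtree_def by (auto intro: exI[of _ 0])

lemma card_subtree_pos: "rooted_tree V par r \<Longrightarrow> v \<in> V \<Longrightarrow> 0 < card (subtree V par v)"
  using finite_subtree subtree_self card_gt_0_iff by fastforce

lemma subtree_root: "rooted_tree V par r \<Longrightarrow> subtree V par r = V"
  unfolding subtree_def rooted_tree_def by auto

lemma subtree_child_subset:
  assumes rt: "rooted_tree V par r" and v: "v \<in> children V par r u"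
  shows "subtree V par v \<subseteq> subtree V par u - {u}"
proof
  fix w assume "w \<in> subtree V par v"
  then obtain a where a: "w \<in> V" "(par ^^ a) w = v" unfolding subtree_def by blast
  have v_props: "par v = u" "v \<noteq> r" using v unfolding children_def by auto
  have path: "(par ^^ Suc a) w = u" using a v_props by simp
  then have "w \<in> subtree V par u" using a unfolding subtree_def by blast
  moreover have "w \<noteq> u"
  proof
    assume "w = u"
    with path a have "u = r" using rooted_tree_cycle_root[OF rt, of u "Suc a"] by simp
    with a \<open>w = u\<close> have "v = r" using rooted_tree_funpow_root[OF rt] by simp
    with v_props show False by simp
  qed
  ultimately show "w \<in> subtree V par u - {u}" by simp
qed

lemma card_subtree_child_less:
  assumes rt: "rooted_tree V par r" and u: "u \<in> V" and v: "v \<in> children V par r u"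
  shows "card (subtree V par v) < card (subtree V par u)"
proof -
  have "card (subtree V par v) \<le> card (subtree V par u - {u})"
    by (rule card_mono) (use finite_subtree[OF rt] subtree_child_subset[OF rt v] in auto)
  also have "\<dots> < card (subtree V par u)"
    using card_subtree_pos[OF rt u] subtree_self[OF u] by simp
  finally show ?thesis .
qed

text \<open>Two distinct children cannot be ancestors of the same vertex: the one farther up
  would then be an ancestor of the other, and going up to their common parent closes a
  cycle away from the root.\<close>
lemma subtree_children_disjoint:
  assumes rt: "rooted_tree V par r" and c: "c \<in> children V par r u" "c' \<in> children V par r u"
    and "c \<noteq> c'"
  shows "subtree V par c \<inter> subtree V par c' = {}"
proof -
  have no_ancestor: False if "d \<in> children V par r u" "d' \<in> children V par r u" "d \<noteq> d'"
      "(par ^^ a) w = d" "(par ^^ b) w = d'" "a \<le> b" for d d' w a b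
  proof -
    have d: "par d = u" "d \<in> V" and d': "par d' = u" "d' \<noteq> r"
      using that(1,2) unfolding children_def by auto
    have "(par ^^ (b - a)) d = d'"
      using that(4-6) by (metis funpow_add comp_apply le_add_diff_inverse2)
    moreover have "b - a \<noteq> 0" using calculation that(3) by auto
    then obtain m where "b - a = Suc m" using not0_implies_Suc by blast
    ultimately have up: "(par ^^ m) u = d'" using d by (simp add: funpow_Suc_right del: funpow.simps)
    then have "(par ^^ Suc m) u = u" using d' by simp
    then have "u = r" using rooted_tree_cycle_root[OF rt] rooted_tree_par_in[OF rt d(2)] d(1) by blast
    then show False using up d' rooted_tree_funpow_root[OF rt] by simp
  qed
  show ?thesis
  proof (rule ccontr)
    assume "subtree V par c \<inter> subtree V par c' \<noteq> {}"
    then obtain w a b where w: "(par ^^ a) w = c" "(par ^^ b) w = c'"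
      unfolding subtree_def by blast
    show False
    proof (cases "a \<le> b")
      case True
      then show False by (rule no_ancestor[OF c \<open>c \<noteq> c'\<close> w])
    next
      case False
      then show False using no_ancestor[OF c(2,1) \<open>c \<noteq> c'\<close>[symmetric] w(2,1)] by simp
    qed
  qed
qed

lemma finite_comp_minus: "rooted_tree V par r \<Longrightarrow> finite (comp_minus V par r x)"
proof -
  assume rt: "rooted_tree V par r"
  have "comp_minus V par r x \<subseteq> insert x V"
  proof
    fix y assume "y \<in> comp_minus V par r x"
    then have "(\<lambda>a b. tree_adj V par a b \<and> a \<noteq> r \<and> b \<noteq> r)\<^sup>*\<^sup>* x y"
      unfolding comp_minus_def by simp
    then show "y \<in> insert x V" by (induction rule: rtranclp_induct) (auto simp: tree_adj_def)
  qed
  then show ?thesis using rt unfolding rooted_tree_def by (metis finite_insert finite_subset)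
qed

lemma subtree_subset_comp_minus:
  assumes rt: "rooted_tree V par r" and "v \<noteq> r"
  shows "subtree V par v \<subseteq> comp_minus V par r v"
proof
  let ?R = "\<lambda>a b. tree_adj V par a b \<and> a \<noteq> r \<and> b \<noteq> r"
  have "?R\<^sup>*\<^sup>* v w" if "w \<in> V" "(par ^^ k) w = v" for k w
    using that
  proof (induction k arbitrary: w)
    case 0
    then show ?case by simp
  next
    case (Suc k)
    have up: "(par ^^ k) (par w) = v"
      using Suc.prems by (simp add: funpow_Suc_right del: funpow.simps)
    have par_w: "par w \<in> V" using rooted_tree_par_in[OF rt Suc.prems(1)] .
    have "w \<noteq> r" using Suc.prems(2) \<open>v \<noteq> r\<close> rooted_tree_funpow_root[OF rt, of "Suc k"] by metis
    moreover have "par w \<noteq> r" using up \<open>v \<noteq> r\<close> rooted_tree_funpow_root[OF rt] by auto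
    moreover have "par w \<noteq> w"
      using rooted_tree_cycle_root[OF rt Suc.prems(1), of 1] \<open>w \<noteq> r\<close> by auto
    ultimately have "?R (par w) w" using par_w Suc.prems(1) unfolding tree_adj_def by auto
    with Suc.IH[OF par_w up] show ?case by (rule rtranclp.rtrancl_into_rtrancl)
  qed
  then show "w \<in> comp_minus V par r v" if "w \<in> subtree V par v" for w
    using that unfolding subtree_def comp_minus_def by blast
qed

lemma gravity_root_card_subtree:
  assumes rt: "rooted_tree V par r" and gr: "gravity_root V par r" and v: "v \<in> V" "v \<noteq> r"
  shows "2 * card (subtree V par v) \<le> card V"
proof -
  have "card (subtree V par v) \<le> card (comp_minus V par r v)"
    by (rule card_mono[OF finite_comp_minus[OF rt] subtree_subset_comp_minus[OF rt v(2)]])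
  moreover have "real (card (comp_minus V par r v)) \<le> real (card V) / 2"
    using gr v unfolding gravity_root_def by blast
  ultimately show ?thesis by linarith
qed

lemma sum_card_subtree_children:
  assumes rt: "rooted_tree V par r" and u: "u \<in> V"
  shows "(\<Sum>v\<in>children V par r u. card (subtree V par v)) \<le> card (subtree V par u) - 1"
proof -
  have fin: "finite (children V par r u)"
    using rt unfolding rooted_tree_def children_def by simp
  have "(\<Sum>v\<in>children V par r u. card (subtree V par v))
      = card (\<Union>v\<in>children V par r u. subtree V par v)"
    using finite_subtree[OF rt] subtree_children_disjoint[OF rt]
    by (intro card_UN_disjoint[OF fin, symmetric]) auto
  also have "\<dots> \<le> card (subtree V par u - {u})"
    using subtree_child_subset[OF rt] finite_subtree[OF rt] by (intro card_mono) auto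
  also have "\<dots> = card (subtree V par u) - 1"
    using subtree_self[OF u] by simp
  finally show ?thesis .
qed

lemma algorithm2_chl:
  "algorithm2 V par r chl a1 a2 pos \<Longrightarrow> u \<in> V \<Longrightarrow>
    distinct (chl u) \<and> set (chl u) = children V par r u"
  unfolding algorithm2_def by blast

lemma algorithm2_a1_first:
  "algorithm2 V par r chl a1 a2 pos \<Longrightarrow> u \<in> V \<Longrightarrow> chl u \<noteq> [] \<Longrightarrow> a1 (chl u ! 0) = a1 u"
  unfolding algorithm2_def by blast

lemma algorithm2_a1_next:
  "algorithm2 V par r chl a1 a2 pos \<Longrightarrow> u \<in> V \<Longrightarrow> 0 < i \<Longrightarrow> i < length (chl u) \<Longrightarrow>
    a1 (chl u ! i) = a2 (chl u ! (i - 1))"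
  unfolding algorithm2_def by blast

lemma algorithm2_wedge_child:
  "algorithm2 V par r chl a1 a2 pos \<Longrightarrow> u \<in> V \<Longrightarrow> v \<in> children V par r u \<Longrightarrow>
    a2 v - a1 v = (a2 u - a1 u) * real (card (subtree V par v)) / (real (card (subtree V par u)) - 1)"
  unfolding algorithm2_def by auto

lemma algorithm2_root: "algorithm2 V par r chl a1 a2 pos \<Longrightarrow> a1 r = 0 \<and> a2 r = pi \<and> pos r = (0, 0)"
  unfolding algorithm2_def by blast

lemma algorithm2_pos:
  "algorithm2 V par r chl a1 a2 pos \<Longrightarrow> v \<in> V \<Longrightarrow> v \<noteq> r \<Longrightarrow>
    pos v = (fst (pos (par v)) + fst (P2 (a1 v) (a2 v)), snd (pos (par v)) + snd (P2 (a1 v) (a2 v)))"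
  unfolding algorithm2_def by blast

lemma algorithm2_a1_nth:
  assumes alg: "algorithm2 V par r chl a1 a2 pos" and u: "u \<in> V" and i: "i < length (chl u)"
  shows "a1 (chl u ! i) = a1 u + (a2 u - a1 u) *
     (\<Sum>j<i. real (card (subtree V par (chl u ! j)))) / (real (card (subtree V par u)) - 1)"
  using i
proof (induction i)
  case 0
  then show ?case using algorithm2_a1_first[OF alg u] by auto
next
  case (Suc i)
  have "chl u ! i \<in> children V par r u"
    using Suc.prems algorithm2_chl[OF alg u] nth_mem[of i "chl u"] by simp
  from algorithm2_wedge_child[OF alg u this]
  have "a1 (chl u ! Suc i) = a1 (chl u ! i) +
      (a2 u - a1 u) * real (card (subtree V par (chl u ! i))) / (real (card (subtree V par u)) - 1)"
    using algorithm2_a1_next[OF alg u, of "Suc i"] Suc.prems by simp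
  then show ?case using Suc by (simp add: add_divide_distrib distrib_left)
qed

lemma algorithm2_sum_card_prefix:
  assumes rt: "rooted_tree V par r" and alg: "algorithm2 V par r chl a1 a2 pos"
    and u: "u \<in> V" and i: "i \<le> length (chl u)"
  shows "(\<Sum>j<i. card (subtree V par (chl u ! j))) \<le> card (subtree V par u) - 1"
proof -
  have chl: "distinct (chl u)" "set (chl u) = children V par r u" using algorithm2_chl[OF alg u] by auto
  have "(\<Sum>j<i. card (subtree V par (chl u ! j))) = (\<Sum>v\<in>(!) (chl u) ` {..<i}. card (subtree V par v))"
    using i by (subst sum.reindex) (auto intro: inj_on_nth[OF chl(1)])
  also have "\<dots> \<le> (\<Sum>v\<in>children V par r u. card (subtree V par v))"
  proof (rule sum_mono2)
    show "finite (children V par r u)" using rt unfolding rooted_tree_def children_def by simp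
    show "(!) (chl u) ` {..<i} \<subseteq> children V par r u"
      using i nth_mem[of _ "chl u"] chl(2) by (auto simp del: set_conv_nth)
  qed simp
  also have "\<dots> \<le> card (subtree V par u) - 1" by (rule sum_card_subtree_children[OF rt u])
  finally show ?thesis .
qed

lemma algorithm2_child_angles:
  assumes rt: "rooted_tree V par r" and alg: "algorithm2 V par r chl a1 a2 pos"
    and u: "u \<in> V" and wedge_pos: "a1 u < a2 u" and v: "v \<in> children V par r u"
  shows "a1 u \<le> a1 v" "a1 v < a2 v" "a2 v \<le> a2 u"
proof -
  obtain i where i: "i < length (chl u)" "v = chl u ! i"
    using v algorithm2_chl[OF alg u] by (metis in_set_conv_nth)
  define D where "D = real (card (subtree V par u)) - 1"
  define S where "S = (\<Sum>j<i. real (card (subtree V par (chl u ! j))))"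
  have card_v: "0 < card (subtree V par v)" using v card_subtree_pos[OF rt] unfolding children_def by blast
  then have D_pos: "0 < D" using card_subtree_child_less[OF rt u v] unfolding D_def by linarith
  have "S + real (card (subtree V par v)) = real (\<Sum>j<Suc i. card (subtree V par (chl u ! j)))"
    unfolding S_def i(2) by simp
  also have "\<dots> \<le> D"
    using algorithm2_sum_card_prefix[OF rt alg u, of "Suc i"] i card_subtree_pos[OF rt u]
    unfolding D_def by linarith
  finally have S_le: "S + real (card (subtree V par v)) \<le> D" .
  have a1_v: "a1 v = a1 u + (a2 u - a1 u) * S / D"
    using algorithm2_a1_nth[OF alg u i(1)] i(2) unfolding S_def D_def by simp
  have a2_v: "a2 v = a1 u + (a2 u - a1 u) * (S + real (card (subtree V par v))) / D"
    using algorithm2_wedge_child[OF alg u v] a1_v unfolding D_def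
    by (simp add: distrib_left add_divide_distrib)
  show "a1 u \<le> a1 v" using a1_v wedge_pos D_pos unfolding S_def by (simp add: sum_nonneg)
  show "a1 v < a2 v" using a1_v a2_v wedge_pos D_pos card_v by (simp add: divide_strict_right_mono)
  have "a2 v \<le> a1 u + (a2 u - a1 u) * D / D"
    unfolding a2_v using S_le wedge_pos D_pos by (intro add_left_mono divide_right_mono mult_left_mono) auto
  then show "a2 v \<le> a2 u" using D_pos by simp
qed

lemma algorithm2_angles:
  assumes rt: "rooted_tree V par r" and alg: "algorithm2 V par r chl a1 a2 pos" and v: "v \<in> V"
  shows "0 \<le> a1 v \<and> a1 v < a2 v \<and> a2 v \<le> pi"
  using rt v
proof (induction rule: rooted_tree_induct)
  case root
  then show ?case using algorithm2_root[OF alg] by simp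
next
  case (step v)
  have "v \<in> children V par r (par v)" using step.hyps unfolding children_def by simp
  from algorithm2_child_angles[OF rt alg rooted_tree_par_in[OF rt step.hyps(1)] _ this] step.IH
  show ?case by linarith
qed

definition wedge_bound :: "nat \<Rightarrow> real" where
  "wedge_bound n = (pi/2) * ((real n - real (oddn n)) / (real n - 1))"

lemma pi_half_le_wedge_bound:
  assumes "2 \<le> n"
  shows "pi/2 \<le> wedge_bound n"
proof -
  have "1 \<le> (real n - real (oddn n)) / (real n - 1)"
    using assms by (simp add: oddn_def)
  then have "pi/2 * 1 \<le> pi/2 * ((real n - real (oddn n)) / (real n - 1))"
    by (intro mult_left_mono) auto
  then show ?thesis unfolding wedge_bound_def by simp
qed

lemma pi_mult_div_le_wedge_bound:
  assumes "2 * s \<le> n" "2 \<le> n"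
  shows "pi * real s / (real n - 1) \<le> wedge_bound n"
proof -
  have "2 * s + oddn n \<le> n" using assms(1) unfolding oddn_def by presburger
  then have "2 * real s \<le> real n - real (oddn n)" by linarith
  then have "(pi/2) * (2 * real s / (real n - 1)) \<le> wedge_bound n"
    unfolding wedge_bound_def using assms(2)
    by (intro mult_left_mono divide_right_mono) auto
  then show ?thesis by simp
qed

lemma algorithm2_wedge_le:
  assumes rt: "rooted_tree V par r" and gr: "gravity_root V par r"
    and alg: "algorithm2 V par r chl a1 a2 pos" and v: "v \<in> V" "v \<noteq> r"
  shows "a2 v - a1 v \<le> wedge_bound (card V)"
proof -
  have "v \<noteq> r \<longrightarrow> a2 v - a1 v \<le> wedge_bound (card V)"
    using rt v(1)
  proof (induction rule: rooted_tree_induct)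
    case root
    then show ?case by simp
  next
    case (step v)
    define u where "u = par v"
    have u: "u \<in> V" using rooted_tree_par_in[OF rt step.hyps(1)] unfolding u_def .
    have child: "v \<in> children V par r u" using step.hyps unfolding children_def u_def by simp
    have angles_u: "a1 u < a2 u" using algorithm2_angles[OF rt alg u] by simp
    show ?case
    proof (cases "u = r")
      case True
      have "card (subtree V par v) < card V"
        using card_subtree_child_less[OF rt u child] True subtree_root[OF rt] by simp
      moreover have "0 < card (subtree V par v)" using card_subtree_pos[OF rt step.hyps(1)] .
      ultimately have "2 \<le> card V" by linarith
      have "a2 v - a1 v = pi * real (card (subtree V par v)) / (real (card V) - 1)"
        using algorithm2_wedge_child[OF alg u child] True algorithm2_root[OF alg] subtree_root[OF rt]
        by simp
      also have "\<dots> \<le> wedge_bound (card V)"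
        using pi_mult_div_le_wedge_bound gravity_root_card_subtree[OF rt gr step.hyps] \<open>2 \<le> card V\<close>
        by blast
      finally show ?thesis by simp
    next
      case False
      have "a2 v - a1 v \<le> a2 u - a1 u" using algorithm2_child_angles[OF rt alg u angles_u child] by simp
      then show ?thesis using step.IH False unfolding u_def by simp
    qed
  qed
  then show ?thesis using v(2) by simp
qed

lemma extent_add_step:
  fixes Y dy th c phi sv su :: real
  assumes "0 < phi" "0 < sv" "0 < su - 1" "th = phi * sv / (su - 1)"
    and "dy * th \<le> c" "Y \<le> (sv - 1) * c / th"
  shows "Y + dy \<le> (su - 1) * c / phi"
proof -
  have th_pos: "0 < th" using assms(1-4) by simp
  then have "dy \<le> c / th" using assms(5) by (simp add: pos_le_divide_eq)
  then have "Y + dy \<le> (sv - 1) * c / th + c / th" using assms(6) by linarith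
  also have "\<dots> = sv * c / th" by (simp add: add_divide_distrib[symmetric] algebra_simps)
  also have "\<dots> = (su - 1) * c / phi" using assms(1-3) unfolding assms(4) by (simp add: field_simps)
  finally show ?thesis .
qed

lemma algorithm2_offset_bounds:
  assumes rt: "rooted_tree V par r" and gr: "gravity_root V par r" and n: "2 \<le> card V"
    and alg: "algorithm2 V par r chl a1 a2 pos" and v: "v \<in> V" "v \<noteq> r"
  shows "0 \<le> snd (pos v) - snd (pos (par v))"
    and "(snd (pos v) - snd (pos (par v))) * (a2 v - a1 v) \<le> wedge_bound (card V)"
    and "\<bar>fst (pos v) - fst (pos (par v))\<bar> * (a2 v - a1 v) \<le> wedge_bound (card V)"
proof -
  have "0 \<le> a1 v" "a1 v < a2 v" "a2 v \<le> pi" using algorithm2_angles[OF rt alg v(1)] by auto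
  from P2_bounds[OF this algorithm2_wedge_le[OF rt gr alg v] pi_half_le_wedge_bound[OF n]]
  show "0 \<le> snd (pos v) - snd (pos (par v))"
    "(snd (pos v) - snd (pos (par v))) * (a2 v - a1 v) \<le> wedge_bound (card V)"
    "\<bar>fst (pos v) - fst (pos (par v))\<bar> * (a2 v - a1 v) \<le> wedge_bound (card V)"
    using algorithm2_pos[OF alg v] by simp_all
qed

lemma algorithm2_subtree_extent:
  assumes rt: "rooted_tree V par r" and gr: "gravity_root V par r" and n: "2 \<le> card V"
    and alg: "algorithm2 V par r chl a1 a2 pos" and w: "w \<in> subtree V par u"
  defines "B \<equiv> \<lambda>x. (real (card (subtree V par x)) - 1) * wedge_bound (card V) / (a2 x - a1 x)"
  shows "0 \<le> snd (pos w) - snd (pos u) \<and> snd (pos w) - snd (pos u) \<le> B u \<and>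
    \<bar>fst (pos w) - fst (pos u)\<bar> \<le> B u"
proof -
  obtain k where "w \<in> V" "(par ^^ k) w = u" using w unfolding subtree_def by blast
  then show ?thesis
  proof (induction k arbitrary: u)
    case 0
    have "0 < card (subtree V par u)" using card_subtree_pos[OF rt] 0 by simp
    moreover have "0 < a2 u - a1 u" using algorithm2_angles[OF rt alg] 0 by simp
    moreover have "0 \<le> wedge_bound (card V)" using pi_half_le_wedge_bound[OF n] pi_gt_zero by linarith
    ultimately show ?case using 0 unfolding B_def by simp
  next
    case (Suc k)
    define v where "v = (par ^^ k) w"
    have v: "v \<in> V" unfolding v_def by (rule rooted_tree_funpow_in[OF rt Suc.prems(1)])
    have u_eq: "u = par v" using Suc.prems(2) unfolding v_def by simp
    have IH: "0 \<le> snd (pos w) - snd (pos v)" "snd (pos w) - snd (pos v) \<le> B v"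
        "\<bar>fst (pos w) - fst (pos v)\<bar> \<le> B v"
      using Suc.IH[OF Suc.prems(1) v_def[symmetric]] by auto
    show ?case
    proof (cases "v = r")
      case True
      then show ?thesis using IH u_eq rt unfolding rooted_tree_def by simp
    next
      case False
      have u: "u \<in> V" using u_eq rooted_tree_par_in[OF rt v] by simp
      have child: "v \<in> children V par r u" using False v u_eq unfolding children_def by simp
      have grow: "Y + dy \<le> B u" if "dy * (a2 v - a1 v) \<le> wedge_bound (card V)" "Y \<le> B v" for Y dy
        unfolding B_def
      proof (rule extent_add_step[OF _ _ _ algorithm2_wedge_child[OF alg u child]])
        show "0 < a2 u - a1 u" using algorithm2_angles[OF rt alg u] by simp
        show "0 < real (card (subtree V par v))" using card_subtree_pos[OF rt v] by simp
        show "0 < real (card (subtree V par u)) - 1"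
          using card_subtree_child_less[OF rt u child] card_subtree_pos[OF rt v] by linarith
      qed (use that in \<open>simp_all add: B_def\<close>)
      note offset = algorithm2_offset_bounds[OF rt gr n alg v False, folded u_eq]
      have "\<bar>fst (pos w) - fst (pos u)\<bar> \<le> \<bar>fst (pos w) - fst (pos v)\<bar> + \<bar>fst (pos v) - fst (pos u)\<bar>"
        by linarith
      then show ?thesis using IH offset grow[OF offset(2) IH(2)] grow[OF offset(3) IH(3)] by simp
    qed
  qed
qed

theorem lemma12:
  fixes V :: "'a set" and par :: "'a \<Rightarrow> 'a" and r u :: 'a
    and chl :: "'a \<Rightarrow> 'a list" and a1 a2 :: "'a \<Rightarrow> real" and pos :: "'a \<Rightarrow> real \<times> real"
  assumes "rooted_tree V par r"
    and "card V > 2"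
    and "gravity_root V par r"
    and "algorithm2 V par r chl a1 a2 pos"
    and "u \<in> V" and "fst (pos u) = 0"
  shows "\<forall>w \<in> subtree V par u.
      0 \<le> snd (pos w) - snd (pos u) \<and>
      snd (pos w) - snd (pos u) \<le>
        (real (card (subtree V par u)) - 1) * (pi / 2) *
        ((real (card V) - real (oddn (card V))) / (real (card V) - 1)) * (1 / (a2 u - a1 u)) \<and>
      \<bar>fst (pos w)\<bar> \<le>
        (real (card (subtree V par u)) - 1) * (pi / 2) *
        ((real (card V) - real (oddn (card V))) / (real (card V) - 1)) * (1 / (a2 u - a1 u))"
proof -
  have bound: "(real (card (subtree V par u)) - 1) * (pi / 2) *
        ((real (card V) - real (oddn (card V))) / (real (card V) - 1)) * (1 / (a2 u - a1 u))
      = (real (card (subtree V par u)) - 1) * wedge_bound (card V) / (a2 u - a1 u)"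
    by (simp add: wedge_bound_def)
  show ?thesis
    unfolding bound using algorithm2_subtree_extent[OF assms(1,3) _ assms(4), where u = u] assms(2,6)
    by simp
qed

end
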